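(* Let $f\in\mathrm{Conv}_0^+(\mathbb{R}^n,\mathbb{R})$ be a smooth ($C^\infty$) function. If $0\ne y=df(x_0)$ for some $x_0\in\mathbb{R}^n$, then (1) $|f^*(y)|\le(1+2|x_0|)\sup_{|x|\le|x_0|+1}|f(x)|$, and (2) $|y|\le 2\sup_{|x|\le|x_0|+1}|f(x)|$. Moreover, for $R\ge0$ and $y\in\mathbb{R}^n$, $f^*(y)\le(1+2R)\sup_{|x|\le R+1}|f(x)|$ implies $|y|\le 2\sup_{|x|\le R+1}|f(x)|$.
   Context: $\mathrm{Conv}(\mathbb{R}^n,\mathbb{R})$ denotes finite-valued convex functions on $\mathbb{R}^n$. $\mathrm{Conv}_0^+(\mathbb{R}^n,\mathbb{R})$ is the set of $f\in\mathrm{Conv}(\mathbb{R}^n,\mathbb{R})$ with $f(0)=0<f(x)$ for all $x\ne0$ such that $f-\lambda\frac{|\cdot|^2}{2}$ is convex for some $\lambda>0$. $f^*(y)=\sup_{x\in\mathbb{R}^n}(\langle y,x\rangle-f(x))$ is the Legendre transform, and $df(x_0)$ is the gradient of $f$ at $x_0$. *)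

theory Defs
  imports "HOL-Analysis.Analysis"
begin

fun Ck :: "nat \<Rightarrow> ('a::euclidean_space \<Rightarrow> real) \<Rightarrow> bool" where
  "Ck 0 g = continuous_on UNIV g"
| "Ck (Suc k) g = ((\<forall>x. g differentiable (at x)) \<and>
      (\<forall>b\<in>Basis. Ck k (\<lambda>x. frechet_derivative g (at x) b)))"

definition smooth_fun :: "('a::euclidean_space \<Rightarrow> real) \<Rightarrow> bool" where
  "smooth_fun g \<longleftrightarrow> (\<forall>k. Ck k g)"

definition Conv0plus :: "('a::euclidean_space \<Rightarrow> real) \<Rightarrow> bool" where
  "Conv0plus f \<longleftrightarrow> convex_on UNIV f \<and> f 0 = 0 \<and> (\<forall>x. x \<noteq> 0 \<longrightarrow> 0 < f x) \<and>
     (\<exists>c>0. convex_on UNIV (\<lambda>x. f x - c * norm x ^ 2 / 2))"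

text \<open>Legendre transform (finite for the functions considered here).\<close>
definition legendre :: "('a::euclidean_space \<Rightarrow> real) \<Rightarrow> 'a \<Rightarrow> real" where
  "legendre f y = (SUP x. inner y x - f x)"

end

theory Submission
  imports Defs
begin

text \<open>If \<open>y\<close> is the gradient of the convex function \<open>f\<close> at \<open>x\<^sub>0\<close>, the tangent plane
  inequality \<open>f x \<ge> f x\<^sub>0 + \<langle>y, x - x\<^sub>0\<rangle>\<close> makes \<open>x\<^sub>0\<close> a maximiser in the supremum defining
  \<open>f\<^sup>*(y)\<close>, so \<open>f\<^sup>*(y) = \<langle>y, x\<^sub>0\<rangle> - f x\<^sub>0\<close>; evaluating the same inequality at
  \<open>x\<^sub>0 + y/|y|\<close> gives \<open>|y| \<le> f (x\<^sub>0 + y/|y|)\<close>, and both bounds follow. For the last claim,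
  test the supremum defining \<open>f\<^sup>*(y)\<close> at \<open>(R + 1) y/|y|\<close>. The quadratic lower bound coming
  from strong convexity is needed only to make \<open>f\<^sup>*\<close> finite.\<close>

lemma convex_on_line:
  fixes f :: "'a::real_vector \<Rightarrow> real"
  assumes "convex_on UNIV f"
  shows "convex_on UNIV (\<lambda>t::real. f (a + t *\<^sub>R v))"
proof (rule convex_onI)
  fix t s u :: real
  assume "0 < t" "t < 1"
  have "a + ((1 - t) * s + t * u) *\<^sub>R v = (1 - t) *\<^sub>R (a + s *\<^sub>R v) + t *\<^sub>R (a + u *\<^sub>R v)"
    by (simp add: algebra_simps)
  then show "f (a + ((1 - t) *\<^sub>R s + t *\<^sub>R u) *\<^sub>R v)
      \<le> (1 - t) * f (a + s *\<^sub>R v) + t * f (a + u *\<^sub>R v)"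
    using convex_onD[OF assms, of t] \<open>0 < t\<close> \<open>t < 1\<close> by simp
qed simp

lemma convex_on_imp_above_tangent_gderiv:
  fixes f :: "'a::real_inner \<Rightarrow> real"
  assumes convex: "convex_on UNIV f" and grad: "GDERIV f x0 :> y"
  shows "f x0 + inner y (x - x0) \<le> f x"
proof -
  define g where "g = (\<lambda>t::real. f (x0 + t *\<^sub>R (x - x0)))"
  have line: "((\<lambda>t. x0 + t *\<^sub>R (x - x0)) has_derivative (\<lambda>t. t *\<^sub>R (x - x0))) (at 0)"
    by (auto intro!: derivative_eq_intros)
  have "(f has_derivative (\<lambda>h. inner h y)) (at (x0 + 0 *\<^sub>R (x - x0)))"
    using grad by (simp add: gderiv_def)
  from has_derivative_compose[OF line this]
  have "(g has_derivative (\<lambda>t. inner (t *\<^sub>R (x - x0)) y)) (at 0)"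
    unfolding g_def .
  then have "(g has_field_derivative inner y (x - x0)) (at 0)"
    by (simp add: has_field_derivative_def inner_commute mult_commute_abs)
  with convex_on_line[OF convex] have "g 1 - g 0 \<ge> inner y (x - x0) * (1 - 0)"
    unfolding g_def by (intro convex_on_imp_above_tangent[where A = UNIV]) auto
  then show ?thesis
    unfolding g_def by simp
qed

lemma legendre_at_gradient:
  fixes f :: "'a::euclidean_space \<Rightarrow> real"
  assumes "convex_on UNIV f" and "GDERIV f x0 :> y"
  shows "legendre f y = inner y x0 - f x0"
  unfolding legendre_def
proof (rule cSup_eq_maximum)
  show "inner y x0 - f x0 \<in> range (\<lambda>x. inner y x - f x)"
    by simp
  fix z
  assume "z \<in> range (\<lambda>x. inner y x - f x)"
  then obtain x where "z = inner y x - f x"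
    by blast
  then show "z \<le> inner y x0 - f x0"
    using convex_on_imp_above_tangent_gderiv[OF assms, of x] by (simp add: inner_diff_right)
qed

lemma convex_on_diff_quadratic_imp_ge:
  fixes f :: "'a::real_normed_vector \<Rightarrow> real"
  assumes f0: "f 0 = 0" and nonneg: "\<And>x. 0 \<le> f x"
    and convex: "convex_on UNIV (\<lambda>x. f x - c * norm x ^ 2 / 2)"
  shows "c * norm x ^ 2 / 2 \<le> f x"
proof (rule field_le_mult_one_interval)
  fix s :: real
  assume "0 < s" "s < 1"
  define t where "t = 1 - s"
  have t: "0 < t" "t < 1"
    using \<open>0 < s\<close> \<open>s < 1\<close> by (auto simp: t_def)
  have "f (t *\<^sub>R x) - c * norm (t *\<^sub>R x) ^ 2 / 2 \<le> t * (f x - c * norm x ^ 2 / 2)"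
    using convex_onD[OF convex, of t 0 x] t f0 by simp
  then have "t * (t * (c * norm x ^ 2 / 2)) \<ge> t * (c * norm x ^ 2 / 2 - f x)"
    using nonneg[of "t *\<^sub>R x"] t by (simp add: power_mult_distrib power2_eq_square algebra_simps)
  then have "t * (c * norm x ^ 2 / 2) \<ge> c * norm x ^ 2 / 2 - f x"
    using t by simp
  then show "s * (c * norm x ^ 2 / 2) \<le> f x"
    by (simp add: t_def algebra_simps)
qed

lemma Conv0plus_quadratic_growth:
  assumes "Conv0plus f"
  shows "\<exists>c>0. \<forall>x. c * norm x ^ 2 / 2 \<le> f x"
proof -
  from assms obtain c where "c > 0" and convex: "convex_on UNIV (\<lambda>x. f x - c * norm x ^ 2 / 2)"
    and f0: "f 0 = 0" and pos: "\<And>x. x \<noteq> 0 \<Longrightarrow> 0 < f x"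
    unfolding Conv0plus_def by blast
  have "0 \<le> f x" for x
    using pos[of x] f0 by (cases "x = 0") auto
  then have "c * norm x ^ 2 / 2 \<le> f x" for x
    by (rule convex_on_diff_quadratic_imp_ge[OF f0 _ convex])
  with \<open>c > 0\<close> show ?thesis
    by blast
qed

lemma inner_minus_le_legendre:
  fixes f :: "'a::euclidean_space \<Rightarrow> real"
  assumes "c > 0" and growth: "\<And>x. c * norm x ^ 2 / 2 \<le> f x"
  shows "inner y x - f x \<le> legendre f y"
  unfolding legendre_def
proof (rule cSUP_upper)
  show "bdd_above (range (\<lambda>x. inner y x - f x))"
  proof (rule bdd_aboveI2)
    fix x :: 'a
    have "0 \<le> (norm y - c * norm x) ^ 2 / (2 * c)"
      using \<open>c > 0\<close> by simp
    then have "norm y * norm x - c * norm x ^ 2 / 2 \<le> norm y ^ 2 / (2 * c)"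
      using \<open>c > 0\<close> by (simp add: power2_diff power2_eq_square field_simps)
    then show "inner y x - f x \<le> norm y ^ 2 / (2 * c)"
      using norm_cauchy_schwarz[of y x] growth[of x] by linarith
  qed
qed simp

lemma inner_sgn_self: "inner x (sgn x) = norm x"
  by (cases "x = 0") (simp_all add: sgn_div_norm power2_norm_eq_inner[symmetric] power2_eq_square)

lemma abs_le_SUP_cball:
  fixes f :: "'a::{real_normed_vector, heine_borel} \<Rightarrow> real"
  assumes "continuous_on UNIV f" and "norm x \<le> r"
  shows "\<bar>f x\<bar> \<le> (SUP z\<in>cball 0 r. \<bar>f z\<bar>)"
proof (rule cSUP_upper)
  have "continuous_on (cball 0 r) (\<lambda>z. \<bar>f z\<bar>)"
    by (intro continuous_intros continuous_on_subset[OF assms(1)]) auto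
  then show "bdd_above ((\<lambda>z. \<bar>f z\<bar>) ` cball 0 r)"
    by (intro bounded_imp_bdd_above compact_imp_bounded compact_continuous_image) auto
qed (use assms(2) in simp)

lemma norm_gderiv_le_SUP_cball:
  fixes f :: "'a::euclidean_space \<Rightarrow> real"
  assumes convex: "convex_on UNIV f" and nonneg: "\<And>x. 0 \<le> f x" and grad: "GDERIV f x0 :> y"
  shows "norm y \<le> (SUP x\<in>cball 0 (norm x0 + 1). \<bar>f x\<bar>)"
proof -
  have "norm (x0 + sgn y) \<le> norm x0 + 1"
    using norm_triangle_ineq[of x0 "sgn y"] by (simp add: norm_sgn split: if_splits)
  then have "\<bar>f (x0 + sgn y)\<bar> \<le> (SUP x\<in>cball 0 (norm x0 + 1). \<bar>f x\<bar>)"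
    by (intro abs_le_SUP_cball convex_on_continuous[OF open_UNIV convex])
  moreover have "f x0 + norm y \<le> f (x0 + sgn y)"
    using convex_on_imp_above_tangent_gderiv[OF convex grad, of "x0 + sgn y"]
    by (simp add: inner_sgn_self)
  ultimately show ?thesis
    using nonneg[of x0] by simp
qed

lemma abs_legendre_at_gradient_le:
  fixes f :: "'a::euclidean_space \<Rightarrow> real"
  assumes convex: "convex_on UNIV f" and nonneg: "\<And>x. 0 \<le> f x" and grad: "GDERIV f x0 :> y"
  shows "\<bar>legendre f y\<bar> \<le> (1 + 2 * norm x0) * (SUP x\<in>cball 0 (norm x0 + 1). \<bar>f x\<bar>)"
proof -
  define M where "M = (SUP x\<in>cball 0 (norm x0 + 1). \<bar>f x\<bar>)"
  have y: "norm y \<le> M"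
    unfolding M_def by (rule norm_gderiv_le_SUP_cball[OF convex nonneg grad])
  have fx0: "f x0 \<le> M"
    using abs_le_SUP_cball[OF convex_on_continuous[OF open_UNIV convex], of x0 "norm x0 + 1"]
    by (simp add: M_def)
  have "\<bar>inner y x0\<bar> \<le> M * norm x0"
    using Cauchy_Schwarz_ineq2[of y x0] mult_right_mono[OF y norm_ge_zero[of x0]] by linarith
  then have "\<bar>legendre f y\<bar> \<le> M * norm x0 + M"
    using legendre_at_gradient[OF convex grad] fx0 nonneg[of x0] by simp
  also have "\<dots> \<le> (1 + 2 * norm x0) * M"
  proof -
    have "0 \<le> M"
      using y norm_ge_zero[of y] by linarith
    then show ?thesis
      using mult_nonneg_nonneg[of M "norm x0"] by (simp add: algebra_simps)
  qed
  finally show ?thesis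
    unfolding M_def .
qed

lemma legendre_ge_radius_norm_minus_SUP_cball:
  fixes f :: "'a::euclidean_space \<Rightarrow> real"
  assumes "continuous_on UNIV f" and "c > 0" and "\<And>x. c * norm x ^ 2 / 2 \<le> f x" and "r \<ge> 0"
  shows "r * norm y - (SUP x\<in>cball 0 r. \<bar>f x\<bar>) \<le> legendre f y"
proof -
  have "\<bar>f (r *\<^sub>R sgn y)\<bar> \<le> (SUP x\<in>cball 0 r. \<bar>f x\<bar>)"
    using assms(1,4) by (intro abs_le_SUP_cball) (simp_all add: norm_sgn)
  moreover have "inner y (r *\<^sub>R sgn y) - f (r *\<^sub>R sgn y) \<le> legendre f y"
    using assms(2,3) by (rule inner_minus_le_legendre)
  ultimately show ?thesis
    by (simp add: inner_sgn_self)
qed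

theorem lemma2p5:
  fixes f :: "'a::euclidean_space \<Rightarrow> real"
  assumes "Conv0plus f" and "smooth_fun f"
  shows "(\<forall>x0 y. y \<noteq> 0 \<and> (GDERIV f x0 :> y) \<longrightarrow>
            \<bar>legendre f y\<bar> \<le> (1 + 2 * norm x0) * (SUP x\<in>cball 0 (norm x0 + 1). \<bar>f x\<bar>) \<and>
            norm y \<le> 2 * (SUP x\<in>cball 0 (norm x0 + 1). \<bar>f x\<bar>))
       \<and> (\<forall>R y. R \<ge> 0 \<and> legendre f y \<le> (1 + 2 * R) * (SUP x\<in>cball 0 (R + 1). \<bar>f x\<bar>) \<longrightarrow>
            norm y \<le> 2 * (SUP x\<in>cball 0 (R + 1). \<bar>f x\<bar>))"
proof -
  have convex: "convex_on UNIV f"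
    using assms(1) by (simp add: Conv0plus_def)
  then have cont: "continuous_on UNIV f"
    by (rule convex_on_continuous[OF open_UNIV])
  obtain c where "c > 0" and growth: "\<And>x. c * norm x ^ 2 / 2 \<le> f x"
    using Conv0plus_quadratic_growth[OF assms(1)] by blast
  have nonneg: "0 \<le> f x" for x
    using order_trans[OF _ growth[of x]] \<open>c > 0\<close> by simp
  show ?thesis
  proof (intro conjI allI impI; elim conjE)
    fix x0 y
    assume grad: "GDERIV f x0 :> y"
    show "\<bar>legendre f y\<bar> \<le> (1 + 2 * norm x0) * (SUP x\<in>cball 0 (norm x0 + 1). \<bar>f x\<bar>)"
      by (rule abs_legendre_at_gradient_le[OF convex nonneg grad])
    show "norm y \<le> 2 * (SUP x\<in>cball 0 (norm x0 + 1). \<bar>f x\<bar>)"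
      using norm_gderiv_le_SUP_cball[OF convex nonneg grad] norm_ge_zero[of y] by linarith
  next
    fix R y
    assume "R \<ge> 0" and "legendre f y \<le> (1 + 2 * R) * (SUP x\<in>cball 0 (R + 1). \<bar>f x\<bar>)"
    then have "(R + 1) * norm y \<le> (R + 1) * (2 * (SUP x\<in>cball 0 (R + 1). \<bar>f x\<bar>))"
      using legendre_ge_radius_norm_minus_SUP_cball[OF cont \<open>c > 0\<close> growth, of "R + 1" y]
      by (simp add: algebra_simps)
    with \<open>R \<ge> 0\<close> show "norm y \<le> 2 * (SUP x\<in>cball 0 (R + 1). \<bar>f x\<bar>)"
      by simp
  qed
qed

end
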